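(* Fix an integer $k\ge1$, let $\Delta_k:=\log(1/2)/\log(1-2^{-k})$, fix $\Delta>0$, and for $n\ge k$ let $m=\lfloor\Delta n\rfloor$. As $n\to\infty$: (i) if $\Delta>\Delta_k$ and $\psi_{\mathsf{FLAT}}(V):=\mathbf{1}\{Z(V)>0\}$, then $$\mathbf{P}_{\text{unif}}(\psi_{\mathsf{FLAT}}=1)\vee\mathbf{P}_{\text{planted}}(\psi_{\mathsf{FLAT}}=0)\to0;$$ (ii) if $\Delta<\Delta_k$, then $$\inf_{\psi}\ \mathbf{P}_{\text{unif}}(\psi=1)\vee\mathbf{P}_{\text{planted}}(\psi=0)\to\tfrac12,$$ where the infimum is over all tests $\psi$, i.e. (possibly randomized) $\{0,1\}$-valued functions of $V$.
   Context: A $k$-flat of $\mathbb{F}_2^n$ is an affine subspace of dimension $n-k$; equivalently a set $\{x\in\mathbb{F}_2^n : \ell_i(x)=\varepsilon_i \ \forall i\in[k]\}$ where $\ell_1,\dots,\ell_k$ are linearly independent linear forms on $\mathbb{F}_2^n$ and $\varepsilon_1,\dots,\varepsilon_k\in\mathbb{F}_2$. Let $q_0$ be the uniform distribution on the set of all $k$-flats, and for $x\in\mathbb{F}_2^n$ let $q_x$ be the uniform distribution on the set of $k$-flats not containing $x$. Define $\mathbf{P}_{\text{unif}}:=q_0^{\otimes m}$, $\mathbf{P}_{x}:=q_x^{\otimes m}$ and $\mathbf{P}_{\text{planted}}:=2^{-n}\sum_{x\in\mathbb{F}_2^n}\mathbf{P}_x$. For $V=(V_1,\dots,V_m)$, $\mathcal{S}(V)=\mathbb{F}_2^n\setminus\bigcup_j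 V_j$ and $Z(V)=|\mathcal{S}(V)|$. $a\vee b=\max(a,b)$. *)

theory Defs
  imports "HOL-Probability.Probability"
begin

text \<open>Vectors of F_2^n are boolean lists of length n; addition is componentwise xor.\<close>

definition vecs :: "nat \<Rightarrow> bool list set" where
  "vecs n = {xs. length xs = n}"

definition vadd :: "bool list \<Rightarrow> bool list \<Rightarrow> bool list" where
  "vadd xs ys = map2 (\<noteq>) xs ys"

text \<open>Affine subspace of F_2^n: nonempty and closed under x+y+z (characteristic 2).\<close>
definition affine_sub :: "nat \<Rightarrow> bool list set \<Rightarrow> bool" where
  "affine_sub n A \<longleftrightarrow> A \<subseteq> vecs n \<and> A \<noteq> {} \<and>
     (\<forall>x\<in>A. \<forall>y\<in>A. \<forall>z\<in>A. vadd (vadd x y) z \<in> A)"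

text \<open>k-flats: affine subspaces of dimension n-k, i.e. of cardinality 2^(n-k).\<close>
definition flats :: "nat \<Rightarrow> nat \<Rightarrow> bool list set set" where
  "flats n k = {A. affine_sub n A \<and> card A = 2 ^ (n - k)}"

definition q0 :: "nat \<Rightarrow> nat \<Rightarrow> bool list set pmf" where
  "q0 n k = pmf_of_set (flats n k)"

definition qx :: "nat \<Rightarrow> nat \<Rightarrow> bool list \<Rightarrow> bool list set pmf" where
  "qx n k x = pmf_of_set {A \<in> flats n k. x \<notin> A}"

text \<open>m-fold products: V = (V_0, ..., V_{m-1}) encoded as a function on {..<m}.\<close>
definition P_unif :: "nat \<Rightarrow> nat \<Rightarrow> nat \<Rightarrow> (nat \<Rightarrow> bool list set) pmf" where
  "P_unif n k m = Pi_pmf {..<m} {} (\<lambda>_. q0 n k)"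

definition P_x :: "nat \<Rightarrow> nat \<Rightarrow> nat \<Rightarrow> bool list \<Rightarrow> (nat \<Rightarrow> bool list set) pmf" where
  "P_x n k m x = Pi_pmf {..<m} {} (\<lambda>_. qx n k x)"

definition P_planted :: "nat \<Rightarrow> nat \<Rightarrow> nat \<Rightarrow> (nat \<Rightarrow> bool list set) pmf" where
  "P_planted n k m = bind_pmf (pmf_of_set (vecs n)) (\<lambda>x. P_x n k m x)"

definition Zc :: "nat \<Rightarrow> nat \<Rightarrow> (nat \<Rightarrow> bool list set) \<Rightarrow> nat" where
  "Zc n m V = card (vecs n - (\<Union>j<m. V j))"

definition Delta_k :: "nat \<Rightarrow> real" where
  "Delta_k k = ln (1/2) / ln (1 - 2 powr (- real k))"

definition mm :: "real \<Rightarrow> nat \<Rightarrow> nat" where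
  "mm \<Delta> n = nat \<lfloor>\<Delta> * real n\<rfloor>"

text \<open>A (possibly randomized) test maps V to a distribution on {0,1} = bool (True = 1).
  Error of a test: max of P_unif(psi = 1) and P_planted(psi = 0).\<close>
definition test_err :: "nat \<Rightarrow> nat \<Rightarrow> nat \<Rightarrow> ((nat \<Rightarrow> bool list set) \<Rightarrow> bool pmf) \<Rightarrow> real" where
  "test_err n k m \<psi> =
     max (measure_pmf.prob (bind_pmf (P_unif n k m) \<psi>) {True})
         (measure_pmf.prob (bind_pmf (P_planted n k m) \<psi>) {False})"

end

theory Submission
  imports Defs
begin

text \<open>
  Under \<open>P_unif\<close> a fixed point avoids a random \<open>k\<close>-flat with probability \<open>1 - 2^-k\<close>, so
  \<open>\<mu> = E Z = 2^n (1 - 2^-k)^m\<close>; since the affine group acts transitively on pairs of distinct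
  points, two distinct points lie in a common random flat with probability at most \<open>2^-2k\<close>,
  whence \<open>E Z^2 \<le> \<mu> + \<mu>^2\<close>. The planted distribution has density \<open>Z / \<mu>\<close> with respect to
  \<open>P_unif\<close>. Above the threshold \<open>\<mu> \<rightarrow> 0\<close>: the planted point keeps \<open>Z > 0\<close> almost surely,
  while \<open>P_unif (Z > 0) \<le> \<mu>\<close>. Below it \<open>\<mu> \<rightarrow> \<infinity>\<close>, and for every test the two error
  probabilities sum to at least \<open>1 - E (Z/\<mu> - 1)\<^sub>+ \<ge> 1 - 1/\<surd>\<mu>\<close> by the second moment bound.
\<close>

lemma length_vadd [simp]: "length (vadd x y) = min (length x) (length y)"
  by (simp add: vadd_def)

lemma nth_vadd [simp]: "i < length x \<Longrightarrow> i < length y \<Longrightarrow> vadd x y ! i = (x!i \<noteq> y!i)"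
  by (simp add: vadd_def)

lemma mem_vecs_iff [simp]: "x \<in> vecs n \<longleftrightarrow> length x = n"
  by (simp add: vecs_def)

lemma vecs_eq_lists: "vecs n = {xs. set xs \<subseteq> UNIV \<and> length xs = n}"
  by auto

lemma finite_vecs [simp]: "finite (vecs n)"
  unfolding vecs_eq_lists by (rule finite_lists_length_eq) simp

lemma card_vecs: "card (vecs n) = 2 ^ n"
  unfolding vecs_eq_lists using card_lists_length_eq[of "UNIV :: bool set" n] by simp

abbreviation zero_vec :: "nat \<Rightarrow> bool list" where
  "zero_vec n \<equiv> replicate n False"

lemma zero_vec_in_vecs: "zero_vec n \<in> vecs n"
  by simp

lemma vadd_self: "x \<in> vecs n \<Longrightarrow> vadd x x = zero_vec n"
  by (auto intro!: nth_equalityI)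

lemma nonzero_vec_ex: "u \<in> vecs n \<Longrightarrow> u \<noteq> zero_vec n \<Longrightarrow> \<exists>i<n. u!i"
  by (metis in_set_conv_nth in_set_replicate length_replicate nth_equalityI mem_vecs_iff)

lemma flats_subset_vecs: "A \<in> flats n k \<Longrightarrow> A \<subseteq> vecs n"
  by (auto simp: flats_def affine_sub_def)

lemma card_flat: "A \<in> flats n k \<Longrightarrow> card A = 2^(n-k)"
  by (auto simp: flats_def)

lemma finite_flats [simp]: "finite (flats n k)"
  by (rule finite_subset[of _ "Pow (vecs n)"]) (auto dest: flats_subset_vecs)

lemma flats_nonempty:
  assumes "k \<le> n" shows "flats n k \<noteq> {}"
proof -
  define A where "A = {xs \<in> vecs n. \<forall>i<k. \<not> xs!i}"
  have A_eq: "A = (\<lambda>ys. replicate k False @ ys) ` vecs (n-k)"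
  proof (intro equalityI subsetI)
    fix xs assume xs: "xs \<in> A"
    have "take k xs = replicate k False"
      using xs assms by (auto simp: A_def intro!: nth_equalityI)
    hence "xs = replicate k False @ drop k xs" by (metis append_take_drop_id)
    moreover have "drop k xs \<in> vecs (n-k)" using xs by (auto simp: A_def)
    ultimately show "xs \<in> (\<lambda>ys. replicate k False @ ys) ` vecs (n-k)" by blast
  qed (use assms in \<open>auto simp: A_def nth_append\<close>)
  have "affine_sub n A"
    unfolding affine_sub_def
  proof (intro conjI ballI)
    show "A \<subseteq> vecs n" by (auto simp: A_def)
    show "A \<noteq> {}" unfolding A_eq by (metis empty_is_image length_replicate mem_vecs_iff empty_iff)
  next
    fix x y z assume "x \<in> A" "y \<in> A" "z \<in> A"
    thus "vadd (vadd x y) z \<in> A" using assms by (auto simp: A_def)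
  qed
  moreover have "card A = 2^(n-k)"
    unfolding A_eq by (subst card_image) (auto simp: inj_on_def card_vecs)
  ultimately show ?thesis by (auto simp: flats_def)
qed

section \<open>Affine involutions permute the flats\<close>

definition affine_involution :: "nat \<Rightarrow> (bool list \<Rightarrow> bool list) \<Rightarrow> bool" where
  "affine_involution n h \<longleftrightarrow> (\<forall>x\<in>vecs n. h x \<in> vecs n \<and> h (h x) = x) \<and>
     (\<forall>x\<in>vecs n. \<forall>y\<in>vecs n. \<forall>z\<in>vecs n. h (vadd (vadd x y) z) = vadd (vadd (h x) (h y)) (h z))"

lemma affine_involution_image_flat:
  assumes h: "affine_involution n h" and A: "A \<in> flats n k"
  shows "h ` A \<in> flats n k"
proof -
  have sub: "A \<subseteq> vecs n" using A by (rule flats_subset_vecs)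
  have "inj_on h A"
    by (rule inj_onI) (metis h affine_involution_def sub subsetD)
  hence "card (h ` A) = 2^(n-k)" using A by (simp add: card_image card_flat)
  moreover have "affine_sub n (h ` A)"
    unfolding affine_sub_def
  proof (intro conjI ballI)
    show "h ` A \<subseteq> vecs n" using h sub by (auto simp: affine_involution_def)
    show "h ` A \<noteq> {}" using A by (auto simp: flats_def affine_sub_def)
  next
    fix a b c assume "a \<in> h ` A" "b \<in> h ` A" "c \<in> h ` A"
    then obtain x y z where xyz: "x\<in>A" "y\<in>A" "z\<in>A" "a = h x" "b = h y" "c = h z" by blast
    have "vadd (vadd x y) z \<in> A" using A xyz by (auto simp: flats_def affine_sub_def)
    moreover have "h (vadd (vadd x y) z) = vadd (vadd a b) c"
      using h xyz sub unfolding affine_involution_def by blast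
    ultimately show "vadd (vadd a b) c \<in> h ` A" by (metis imageI)
  qed
  ultimately show ?thesis by (simp add: flats_def)
qed

lemma affine_involution_mem_image:
  assumes "affine_involution n h" "A \<in> flats n k" "x \<in> vecs n"
  shows "x \<in> h ` A \<longleftrightarrow> h x \<in> A"
  using assms flats_subset_vecs[OF assms(2)] unfolding affine_involution_def
  by (smt (verit, best) image_iff subsetD)

lemma card_flats_affine_involution:
  assumes h: "affine_involution n h"
  shows "card {A \<in> flats n k. P A} = card {A \<in> flats n k. P (h ` A)}"
proof -
  have hh: "h ` h ` A = A" if "A \<in> flats n k" for A
    using h flats_subset_vecs[OF that] by (force simp: affine_involution_def image_image)
  have "bij_betw ((`) h) {A \<in> flats n k. P (h ` A)} {A \<in> flats n k. P A}"
    by (rule bij_betw_byWitness[where f'="(`) h"])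
       (auto simp: hh affine_involution_image_flat[OF h])
  thus ?thesis by (simp add: bij_betw_same_card)
qed

lemma affine_involution_translation: "v \<in> vecs n \<Longrightarrow> affine_involution n (vadd v)"
  unfolding affine_involution_def by (auto intro!: nth_equalityI)

text \<open>\<open>x \<mapsto> x + f(x) c\<close> for the linear form \<open>f(x) = x\<^sub>i + b x\<^sub>j\<close>; it is an involution because \<open>f(c) = 0\<close>.\<close>

definition transvection :: "nat \<Rightarrow> nat \<Rightarrow> bool \<Rightarrow> bool list \<Rightarrow> bool list \<Rightarrow> bool list" where
  "transvection i j b c x = (if x!i \<noteq> (b \<and> x!j) then vadd x c else x)"

lemma affine_involution_transvection:
  assumes ij: "i < n" "j < n" and c: "c \<in> vecs n" and fc: "c!i = (b \<and> c!j)"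
  shows "affine_involution n (transvection i j b c)"
proof -
  define f where "f x = (x!i \<noteq> (b \<and> x!j))" for x :: "bool list"
  let ?t = "transvection i j b c"
  have t_eq: "?t x = (if f x then vadd x c else x)" for x
    by (simp add: transvection_def f_def)
  have len: "length (?t x) = n" if "length x = n" for x
    using that c by (simp add: t_eq)
  have nth: "?t x ! l = (x!l \<noteq> (f x \<and> c!l))" if "length x = n" "l < n" for x l
    using that c by (simp add: t_eq)
  have f_vadd: "f (vadd x y) = (f x \<noteq> f y)" if "length x = n" "length y = n" for x y
    using that ij by (auto simp: f_def)
  have f_t: "f (?t x) = f x" if "length x = n" for x
    using that ij fc by (auto simp: f_def nth)
  show ?thesis unfolding affine_involution_def
  proof (intro conjI ballI)
    fix x assume x: "x \<in> vecs n"
    show "?t x \<in> vecs n" using x len by simp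
    show "?t (?t x) = x"
      by (rule nth_equalityI) (use x len nth f_t in auto)
  next
    fix x y z assume "x \<in> vecs n" "y \<in> vecs n" "z \<in> vecs n"
    hence L: "length x = n" "length y = n" "length z = n" by auto
    show "?t (vadd (vadd x y) z) = vadd (vadd (?t x) (?t y)) (?t z)"
    proof (rule nth_equalityI)
      fix l assume "l < length (?t (vadd (vadd x y) z))"
      hence l: "l < n" using L len by simp
      have "?t (vadd (vadd x y) z) ! l
          = (((x!l \<noteq> y!l) \<noteq> z!l) \<noteq> (((f x \<noteq> f y) \<noteq> f z) \<and> c!l))"
        using L l by (simp add: nth f_vadd)
      also have "\<dots> = vadd (vadd (?t x) (?t y)) (?t z) ! l"
        using L l len nth by auto
      finally show "?t (vadd (vadd x y) z) ! l = vadd (vadd (?t x) (?t y)) (?t z) ! l" .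
    qed (use L len in auto)
  qed
qed

section \<open>Counting flats through points\<close>

lemma card_flats_containing_translate:
  assumes x: "x \<in> vecs n"
  shows "card {A \<in> flats n k. x \<in> A} = card {A \<in> flats n k. zero_vec n \<in> A}"
proof -
  have h: "affine_involution n (vadd x)" using x by (rule affine_involution_translation)
  have "card {A \<in> flats n k. x \<in> A} = card {A \<in> flats n k. x \<in> vadd x ` A}"
    by (rule card_flats_affine_involution[OF h])
  also have "{A \<in> flats n k. x \<in> vadd x ` A} = {A \<in> flats n k. zero_vec n \<in> A}"
    by (simp cong: conj_cong add: affine_involution_mem_image[OF h _ x, where k=k] vadd_self[OF x])
  finally show ?thesis .
qed

lemma card_flats_containing_pair_translate:
  assumes x: "x \<in> vecs n" and y: "y \<in> vecs n"
  shows "card {A \<in> flats n k. x \<in> A \<and> y \<in> A}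
       = card {A \<in> flats n k. zero_vec n \<in> A \<and> vadd x y \<in> A}"
proof -
  have h: "affine_involution n (vadd x)" using x by (rule affine_involution_translation)
  have "card {A \<in> flats n k. x \<in> A \<and> y \<in> A} = card {A \<in> flats n k. x \<in> vadd x ` A \<and> y \<in> vadd x ` A}"
    by (rule card_flats_affine_involution[OF h])
  also have "{A \<in> flats n k. x \<in> vadd x ` A \<and> y \<in> vadd x ` A}
           = {A \<in> flats n k. zero_vec n \<in> A \<and> vadd x y \<in> A}"
    by (simp cong: conj_cong add: affine_involution_mem_image[OF h _ x, where k=k]
        affine_involution_mem_image[OF h _ y, where k=k] vadd_self[OF x])
  finally show ?thesis .
qed

lemma card_flats_containing_zero_and_eq:
  assumes u: "u \<in> vecs n" "u \<noteq> zero_vec n" and w: "w \<in> vecs n" "w \<noteq> zero_vec n"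
  shows "card {A \<in> flats n k. zero_vec n \<in> A \<and> u \<in> A}
       = card {A \<in> flats n k. zero_vec n \<in> A \<and> w \<in> A}"
proof -
  \<comment> \<open>a linear form \<open>f\<close> with \<open>f u = f w = 1\<close>; the transvection along \<open>u + w\<close> then swaps \<open>u\<close> and \<open>w\<close>\<close>
  obtain i j b where ijb: "i < n" "j < n" "u!i \<noteq> (b \<and> u!j)" "w!i \<noteq> (b \<and> w!j)"
  proof (cases "\<exists>i<n. u!i \<and> w!i")
    case True
    thus ?thesis using that[of _ _ False] by auto
  next
    case False
    obtain i j where "i < n" "u!i" "j < n" "w!j" using nonzero_vec_ex u w by blast
    thus ?thesis using False that[of i j True] by auto
  qed
  define c where "c = vadd u w"
  let ?t = "transvection i j b c"
  have h: "affine_involution n ?t"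
    using ijb u w by (intro affine_involution_transvection) (auto simp: c_def)
  have t0: "?t (zero_vec n) = zero_vec n" using ijb by (simp add: transvection_def)
  have tu: "?t u = w" using ijb u w by (auto simp: transvection_def c_def intro!: nth_equalityI)
  have "card {A \<in> flats n k. zero_vec n \<in> A \<and> u \<in> A}
      = card {A \<in> flats n k. zero_vec n \<in> ?t ` A \<and> u \<in> ?t ` A}"
    by (rule card_flats_affine_involution[OF h])
  also have "{A \<in> flats n k. zero_vec n \<in> ?t ` A \<and> u \<in> ?t ` A}
           = {A \<in> flats n k. zero_vec n \<in> A \<and> w \<in> A}"
    by (simp cong: conj_cong add: affine_involution_mem_image[OF h _ u(1), where k=k]
        affine_involution_mem_image[OF h _ zero_vec_in_vecs, where k=k] t0 tu)
  finally show ?thesis .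
qed

lemma double_counting:
  assumes "finite S" "finite D"
  shows "(\<Sum>d\<in>D. card {A\<in>S. R A d}) = (\<Sum>A\<in>S. card {d\<in>D. R A d})"
proof -
  have "(\<Sum>d\<in>D. card {A\<in>S. R A d}) = (\<Sum>d\<in>D. \<Sum>A\<in>S. if R A d then 1 else 0)"
    using assms by (simp add: sum.inter_filter[symmetric])
  also have "\<dots> = (\<Sum>A\<in>S. \<Sum>d\<in>D. if R A d then 1 else 0)"
    by (rule sum.swap)
  also have "\<dots> = (\<Sum>A\<in>S. card {d\<in>D. R A d})"
    using assms by (simp add: sum.inter_filter[symmetric])
  finally show ?thesis .
qed

lemma card_flats_containing_zero:
  "2^n * card {A \<in> flats n k. zero_vec n \<in> A} = card (flats n k) * 2^(n-k)"
proof -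
  have "2^n * card {A \<in> flats n k. zero_vec n \<in> A} = (\<Sum>x\<in>vecs n. card {A \<in> flats n k. zero_vec n \<in> A})"
    by (simp add: card_vecs)
  also have "\<dots> = (\<Sum>x\<in>vecs n. card {A \<in> flats n k. x \<in> A})"
    by (intro sum.cong refl card_flats_containing_translate[symmetric])
  also have "\<dots> = (\<Sum>A\<in>flats n k. card {x\<in>vecs n. x \<in> A})"
    by (rule double_counting) auto
  also have "\<dots> = (\<Sum>A\<in>flats n k. 2^(n-k))"
  proof (rule sum.cong)
    fix A assume A: "A \<in> flats n k"
    hence "{x\<in>vecs n. x \<in> A} = A" using flats_subset_vecs by blast
    thus "card {x\<in>vecs n. x \<in> A} = 2^(n-k)" using card_flat[OF A] by simp
  qed simp
  finally show ?thesis by simp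
qed

lemma card_flats_containing_zero_and:
  assumes e: "e \<in> vecs n" "e \<noteq> zero_vec n"
  shows "(2^n - 1) * card {A \<in> flats n k. zero_vec n \<in> A \<and> e \<in> A}
       = card {A \<in> flats n k. zero_vec n \<in> A} * (2^(n-k) - 1)"
proof -
  let ?D = "vecs n - {zero_vec n}"
  have card_in_flat: "card {d\<in>?D. zero_vec n \<in> A \<and> d \<in> A}
      = (if zero_vec n \<in> A then 2^(n-k) - 1 else 0)" if A: "A \<in> flats n k" for A
  proof -
    have "{d\<in>?D. zero_vec n \<in> A \<and> d \<in> A} = (if zero_vec n \<in> A then A - {zero_vec n} else {})"
      using flats_subset_vecs[OF A] by auto
    thus ?thesis using card_flat[OF A] finite_subset[OF flats_subset_vecs[OF A]] by simp
  qed
  have "(2^n - 1) * card {A \<in> flats n k. zero_vec n \<in> A \<and> e \<in> A}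
      = (\<Sum>d\<in>?D. card {A \<in> flats n k. zero_vec n \<in> A \<and> e \<in> A})"
    by (simp add: card_vecs)
  also have "\<dots> = (\<Sum>d\<in>?D. card {A \<in> flats n k. zero_vec n \<in> A \<and> d \<in> A})"
    using e by (intro sum.cong[OF refl card_flats_containing_zero_and_eq]) auto
  also have "\<dots> = (\<Sum>A\<in>flats n k. card {d\<in>?D. zero_vec n \<in> A \<and> d \<in> A})"
    by (rule double_counting) auto
  also have "\<dots> = (\<Sum>A\<in>flats n k. if zero_vec n \<in> A then 2^(n-k) - 1 else 0)"
    by (rule sum.cong[OF refl card_in_flat])
  also have "\<dots> = card {A \<in> flats n k. zero_vec n \<in> A} * (2^(n-k) - 1)"
    by (simp add: sum.inter_filter[symmetric])
  finally show ?thesis .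
qed

definition mean_Z :: "nat \<Rightarrow> nat \<Rightarrow> nat \<Rightarrow> real" where
  "mean_Z n k m = 2^n * (1 - 1/2^k)^m"

lemma prod_of_bool_all: "(\<Prod>j<(m::nat). of_bool (P j) :: real) = of_bool (\<forall>j<m. P j)"
  by (induction m) (auto simp: less_Suc_eq)

lemma Zc_eq_sum_prod: "real (Zc n m V) = (\<Sum>x\<in>vecs n. \<Prod>j<m. of_bool (x \<notin> V j))"
proof -
  have "vecs n - (\<Union>j<m. V j) = {x\<in>vecs n. \<forall>j<m. x \<notin> V j}" by auto
  thus ?thesis by (simp add: Zc_def Int_def prod_of_bool_all)
qed

locale k_flats =
  fixes n k :: nat
  assumes k_ge_1: "1 \<le> k" and k_le_n: "k \<le> n"
begin

abbreviation F :: real where "F \<equiv> real (card (flats n k))"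
abbreviation p :: real where "p \<equiv> 1 / 2^k"

lemma F_pos: "F > 0"
  using flats_nonempty[OF k_le_n] by (simp add: card_gt_0_iff)

lemma p_less_1: "p < 1"
  using one_less_power[of "2::real" k] k_ge_1 by simp

lemma mean_Z_pos: "mean_Z n k m > 0"
  using p_less_1 by (simp add: mean_Z_def)

lemma card_flats_containing:
  assumes "x \<in> vecs n"
  shows "real (card {A \<in> flats n k. x \<in> A}) = F * p"
proof -
  have two_pow: "(2::real)^n = 2^k * 2^(n-k)" using k_le_n by (simp add: power_add[symmetric])
  have "real (2^n * card {A \<in> flats n k. zero_vec n \<in> A}) = real (card (flats n k) * 2^(n-k))"
    by (rule arg_cong[OF card_flats_containing_zero])
  hence "2^k * 2^(n-k) * real (card {A \<in> flats n k. zero_vec n \<in> A}) = F * 2^(n-k)"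
    by (simp add: two_pow)
  hence "real (card {A \<in> flats n k. zero_vec n \<in> A}) = F * p"
    by (simp add: field_simps)
  thus ?thesis by (simp only: card_flats_containing_translate[OF assms])
qed

lemma card_flats_avoiding:
  assumes "x \<in> vecs n"
  shows "real (card {A \<in> flats n k. x \<notin> A}) = F * (1 - p)"
proof -
  have "real (card {A \<in> flats n k. x \<notin> A}) = (\<Sum>A\<in>flats n k. of_bool (x \<notin> A))"
    by (simp add: Int_def)
  also have "\<dots> = (\<Sum>A\<in>flats n k. 1 - of_bool (x \<in> A))"
    by (rule sum.cong) auto
  also have "\<dots> = F - F * p"
    using card_flats_containing[OF assms] by (simp add: sum_subtractf Int_def)
  finally show ?thesis by (simp add: algebra_simps)
qed

lemma card_flats_containing_pair_le:
  assumes x: "x \<in> vecs n" and y: "y \<in> vecs n" and "x \<noteq> y"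
  shows "real (card {A \<in> flats n k. x \<in> A \<and> y \<in> A}) \<le> F * p^2"
proof -
  define e where "e = vadd x y"
  have e_vec: "e \<in> vecs n" using x y by (simp add: e_def)
  have e_nonzero: "e \<noteq> zero_vec n"
  proof
    assume "e = zero_vec n"
    hence "\<forall>i<n. e!i = False" by simp
    hence "x = y" using x y by (intro nth_equalityI) (auto simp: e_def)
    thus False using \<open>x \<noteq> y\<close> by simp
  qed
  define c where "c = real (card {A \<in> flats n k. zero_vec n \<in> A \<and> e \<in> A})"
  have "(2::real)^1 \<le> 2^n" using k_ge_1 k_le_n by (intro power_increasing) auto
  hence pos: "(0::real) < 2^n - 1" by simp
  have "real ((2^n - 1) * card {A \<in> flats n k. zero_vec n \<in> A \<and> e \<in> A})
      = real (card {A \<in> flats n k. zero_vec n \<in> A} * (2^(n-k) - 1))"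
    by (rule arg_cong[OF card_flats_containing_zero_and[OF e_vec e_nonzero]])
  moreover have "(1::nat) \<le> 2^n" "(1::nat) \<le> 2^(n-k)" by simp_all
  ultimately have "(2^n - 1) * c = F * p * (2^(n-k) - 1)"
    using card_flats_containing[of "zero_vec n"] by (simp add: c_def of_nat_diff)
  also have "\<dots> \<le> F * p * (p * (2^n - 1))"
  proof -
    have "p * 2^n = 2^(n-k)" using k_le_n by (simp add: power_diff)
    hence "(2::real)^(n-k) - 1 \<le> p * (2^n - 1)" using p_less_1 by (simp add: right_diff_distrib)
    thus ?thesis using F_pos by (intro mult_left_mono) auto
  qed
  finally have "(2^n - 1) * c \<le> (2^n - 1) * (F * p^2)"
    by (simp add: power2_eq_square mult_ac)
  hence "c \<le> F * p^2" using pos by (rule mult_left_le_imp_le)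
  thus ?thesis using card_flats_containing_pair_translate[OF x y] by (simp add: c_def e_def)
qed

section \<open>Moments of \<open>Z\<close> under \<open>P_unif\<close>\<close>

lemma set_pmf_q0 [simp]: "set_pmf (q0 n k) = flats n k"
  using flats_nonempty[OF k_le_n] by (simp add: q0_def)

lemma expectation_q0: "measure_pmf.expectation (q0 n k) f = (\<Sum>A\<in>flats n k. f A) / F"
  using flats_nonempty[OF k_le_n] by (simp add: q0_def integral_pmf_of_set)

lemma expectation_q0_avoid:
  assumes "x \<in> vecs n"
  shows "measure_pmf.expectation (q0 n k) (\<lambda>A. of_bool (x \<notin> A)) = 1 - p"
proof -
  have "(\<Sum>A\<in>flats n k. of_bool (x \<notin> A) :: real) = real (card {A \<in> flats n k. x \<notin> A})"
    by (simp add: Int_def)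
  also have "\<dots> = F * (1 - p)" by (rule card_flats_avoiding[OF assms])
  finally show ?thesis using flats_nonempty[OF k_le_n] by (simp add: expectation_q0)
qed

lemma expectation_q0_avoid_pair_le:
  assumes x: "x \<in> vecs n" and y: "y \<in> vecs n"
  shows "measure_pmf.expectation (q0 n k) (\<lambda>A. of_bool (x \<notin> A) * of_bool (y \<notin> A))
     \<le> (if x = y then 1 - p else (1 - p)^2)"
proof (cases "x = y")
  case True
  hence "(\<lambda>A. of_bool (x \<notin> A) * of_bool (y \<notin> A) :: real) = (\<lambda>A. of_bool (x \<notin> A))"
    by auto
  thus ?thesis using expectation_q0_avoid[OF x] True by simp
next
  case False
  have "(\<Sum>A\<in>flats n k. (of_bool (x \<notin> A) * of_bool (y \<notin> A)::real))
      = (\<Sum>A\<in>flats n k. 1 - of_bool (x \<in> A) - of_bool (y \<in> A) + of_bool (x \<in> A \<and> y \<in> A))"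
    by (rule sum.cong) auto
  also have "\<dots> = F - F * p - F * p + real (card {A \<in> flats n k. x \<in> A \<and> y \<in> A})"
    using card_flats_containing[OF x] card_flats_containing[OF y]
    by (simp add: sum.distrib sum_subtractf Int_def)
  also have "\<dots> \<le> F * (1 - p)^2"
    using card_flats_containing_pair_le[OF x y False] by (simp add: power2_eq_square algebra_simps)
  finally show ?thesis using False F_pos by (simp add: expectation_q0 pos_divide_le_eq mult.commute)
qed

abbreviation Pu :: "nat \<Rightarrow> (nat \<Rightarrow> bool list set) pmf" where
  "Pu m \<equiv> P_unif n k m"

lemma finite_set_pmf_Pu: "finite (set_pmf (Pu m))"
  unfolding P_unif_def by (subst set_Pi_pmf) auto

lemma integrable_Pu [simp]: "integrable (measure_pmf (Pu m)) (f :: _ \<Rightarrow> real)"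
  by (rule integrable_measure_pmf_finite[OF finite_set_pmf_Pu])

lemma integrable_q0 [simp]: "integrable (measure_pmf (q0 n k)) (f :: _ \<Rightarrow> real)"
  by (rule integrable_measure_pmf_finite) simp

lemma expectation_Pu_prod:
  fixes f :: "bool list set \<Rightarrow> real"
  assumes "\<And>A. f A \<ge> 0"
  shows "measure_pmf.expectation (Pu m) (\<lambda>V. \<Prod>j<m. f (V j)) = (measure_pmf.expectation (q0 n k) f)^m"
  unfolding P_unif_def
  using expectation_prod_Pi_pmf[of "{..<m}" "\<lambda>_. q0 n k" "\<lambda>_. f" "{}"] assms by simp

lemma expectation_Z: "measure_pmf.expectation (Pu m) (\<lambda>V. real (Zc n m V)) = mean_Z n k m"
proof -
  have "measure_pmf.expectation (Pu m) (\<lambda>V. real (Zc n m V))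
      = (\<Sum>x\<in>vecs n. measure_pmf.expectation (Pu m) (\<lambda>V. \<Prod>j<m. of_bool (x \<notin> V j)))"
    by (simp add: Zc_eq_sum_prod integral_sum)
  also have "\<dots> = (\<Sum>x\<in>vecs n. (1 - p)^m)"
  proof (rule sum.cong)
    fix x assume "x \<in> vecs n"
    thus "measure_pmf.expectation (Pu m) (\<lambda>V. \<Prod>j<m. of_bool (x \<notin> V j)) = (1 - p)^m"
      using expectation_Pu_prod[of "\<lambda>A. of_bool (x \<notin> A)" m] expectation_q0_avoid by simp
  qed simp
  finally show ?thesis by (simp add: card_vecs mean_Z_def)
qed

lemma expectation_Z_squared_le:
  "measure_pmf.expectation (Pu m) (\<lambda>V. (real (Zc n m V))^2) \<le> mean_Z n k m + (mean_Z n k m)^2"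
proof -
  have "measure_pmf.expectation (Pu m) (\<lambda>V. (real (Zc n m V))^2)
      = (\<Sum>x\<in>vecs n. \<Sum>y\<in>vecs n.
           measure_pmf.expectation (Pu m) (\<lambda>V. \<Prod>j<m. of_bool (x \<notin> V j) * of_bool (y \<notin> V j)))"
    by (simp add: Zc_eq_sum_prod power2_eq_square sum_product prod.distrib integral_sum)
  also have "\<dots> = (\<Sum>x\<in>vecs n. \<Sum>y\<in>vecs n.
      (measure_pmf.expectation (q0 n k) (\<lambda>A. of_bool (x \<notin> A) * of_bool (y \<notin> A)))^m)"
    by (subst expectation_Pu_prod) auto
  also have "\<dots> \<le> (\<Sum>x\<in>vecs n. \<Sum>y\<in>vecs n. of_bool (x = y) * (1-p)^m + ((1-p)^2)^m)"
  proof (intro sum_mono)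
    fix x y assume xy: "x \<in> vecs n" "y \<in> vecs n"
    have "(measure_pmf.expectation (q0 n k) (\<lambda>A. of_bool (x \<notin> A) * of_bool (y \<notin> A)))^m
       \<le> (if x = y then 1 - p else (1 - p)^2)^m"
      by (intro power_mono expectation_q0_avoid_pair_le xy) (simp add: integral_nonneg)
    also have "\<dots> \<le> of_bool (x = y) * (1-p)^m + ((1-p)^2)^m" using p_less_1 by auto
    finally show "(measure_pmf.expectation (q0 n k) (\<lambda>A. of_bool (x \<notin> A) * of_bool (y \<notin> A)))^m
       \<le> of_bool (x = y) * (1-p)^m + ((1-p)^2)^m" .
  qed
  also have "\<dots> = 2^n * ((1-p)^m + 2^n * ((1-p)^2)^m)"
    by (simp add: sum.distrib card_vecs sum.delta)
  also have "\<dots> = mean_Z n k m + (mean_Z n k m)^2"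
  proof -
    have "((1-p)^2)^m = ((1-p)^m)^2" by (simp add: power_mult[symmetric] mult.commute)
    thus ?thesis unfolding mean_Z_def by (simp add: power_mult_distrib power2_eq_square algebra_simps)
  qed
  finally show ?thesis .
qed

lemma expectation_Z_deviation_le:
  "measure_pmf.expectation (Pu m) (\<lambda>V. (real (Zc n m V) / mean_Z n k m - 1)^2) \<le> 1 / mean_Z n k m"
proof -
  let ?\<mu> = "mean_Z n k m" and ?E = "measure_pmf.expectation (Pu m)"
  have "?E (\<lambda>V. (real (Zc n m V) / ?\<mu> - 1)^2)
      = ?E (\<lambda>V. (real (Zc n m V))^2) / ?\<mu>^2 - 2 * ?E (\<lambda>V. real (Zc n m V)) / ?\<mu> + 1"
    by (simp add: power2_diff power_divide integral_diff)
  also have "\<dots> \<le> (?\<mu> + ?\<mu>^2) / ?\<mu>^2 - 1"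
    using expectation_Z_squared_le[of m] mean_Z_pos[of m]
    by (simp add: expectation_Z divide_right_mono)
  also have "\<dots> = 1 / ?\<mu>"
    using mean_Z_pos[of m] by (simp add: field_simps power2_eq_square)
  finally show ?thesis .
qed

section \<open>The planted distribution\<close>

lemma pmf_q0: "pmf (q0 n k) A = indicator (flats n k) A / F"
  using flats_nonempty[OF k_le_n] by (simp add: q0_def)

lemma pmf_qx:
  assumes x: "x \<in> vecs n"
  shows "pmf (qx n k x) A = pmf (q0 n k) A * of_bool (x \<notin> A) / (1 - p)"
proof -
  have "real (card {A \<in> flats n k. x \<notin> A}) > 0"
    unfolding card_flats_avoiding[OF x] using F_pos p_less_1 by simp
  hence "{A \<in> flats n k. x \<notin> A} \<noteq> {}" by (metis card.empty of_nat_0 less_irrefl)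
  thus ?thesis
    using flats_nonempty[OF k_le_n] by (simp add: qx_def card_flats_avoiding[OF x] pmf_q0 indicator_def)
qed

lemma pmf_P_x:
  assumes x: "x \<in> vecs n"
  shows "pmf (P_x n k m x) V = pmf (Pu m) V * of_bool (\<forall>j<m. x \<notin> V j) / (1 - p)^m"
proof (cases "\<forall>i. i \<notin> {..<m} \<longrightarrow> V i = {}")
  case True
  have "(\<Prod>j<m. pmf (qx n k x) (V j))
      = (\<Prod>j<m. pmf (q0 n k) (V j)) * (\<Prod>j<m. of_bool (x \<notin> V j)) / (1 - p)^m"
    by (simp add: pmf_qx[OF x] prod_dividef prod.distrib)
  thus ?thesis using True
    unfolding P_x_def P_unif_def by (simp only: pmf_Pi finite_lessThan if_P[OF True] prod_of_bool_all)
next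
  case False
  thus ?thesis unfolding P_x_def P_unif_def by (simp only: pmf_Pi finite_lessThan if_False)
qed

lemma pmf_P_planted: "pmf (P_planted n k m) V = pmf (Pu m) V * real (Zc n m V) / mean_Z n k m"
proof -
  have "vecs n \<noteq> {}" using mem_vecs_iff[of "zero_vec n" n] by (metis empty_iff length_replicate)
  hence "pmf (P_planted n k m) V = (\<Sum>x\<in>vecs n. pmf (P_x n k m x) V) / 2^n"
    unfolding P_planted_def by (simp add: pmf_bind_pmf_of_set card_vecs)
  also have "\<dots> = pmf (Pu m) V * (\<Sum>x\<in>vecs n. of_bool (\<forall>j<m. x \<notin> V j)) / mean_Z n k m"
    by (simp add: pmf_P_x mean_Z_def sum_divide_distrib[symmetric] sum_distrib_left[symmetric]
        del: sum_of_bool_eq)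
  finally show ?thesis
    by (simp add: Zc_eq_sum_prod prod_of_bool_all del: sum_of_bool_eq)
qed

lemma expectation_P_planted:
  "measure_pmf.expectation (P_planted n k m) h
 = measure_pmf.expectation (Pu m) (\<lambda>V. h V * real (Zc n m V) / mean_Z n k m)"
proof -
  have sub: "set_pmf (P_planted n k m) \<subseteq> set_pmf (Pu m)"
    by (auto simp: set_pmf_iff pmf_P_planted)
  have "measure_pmf.expectation (P_planted n k m) h = (\<Sum>V\<in>set_pmf (Pu m). h V * pmf (P_planted n k m) V)"
    by (rule integral_measure_pmf_real) (use finite_set_pmf_Pu sub in auto)
  also have "\<dots> = (\<Sum>V\<in>set_pmf (Pu m). (h V * real (Zc n m V) / mean_Z n k m) * pmf (Pu m) V)"
    by (simp add: pmf_P_planted mult_ac)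
  also have "\<dots> = measure_pmf.expectation (Pu m) (\<lambda>V. h V * real (Zc n m V) / mean_Z n k m)"
    by (rule integral_measure_pmf_real[symmetric]) (auto simp: finite_set_pmf_Pu)
  finally show ?thesis .
qed

end

lemma mult_le_eps_plus_square:
  fixes g y e :: real
  assumes "0 \<le> g" "g \<le> 1" "e > 0"
  shows "g * y \<le> e + y^2 / (4 * e)"
proof -
  have "g * y \<le> g * \<bar>y\<bar>" using assms(1) by (intro mult_left_mono) auto
  also have "\<dots> \<le> \<bar>y\<bar>" using assms(1,2) by (intro mult_left_le_one_le) auto
  also have "\<dots> \<le> e + y^2 / (4 * e)" \<comment> \<open>AM-GM\<close>
    using sum_power2_ge_zero[of "\<bar>y\<bar> - 2 * e" 0] assms(3) by (simp add: field_simps power2_eq_square)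
  finally show ?thesis .
qed

lemma INF_test_err_le_half: "(INF \<psi>. test_err n k m \<psi>) \<le> 1/2"
proof -
  have "bdd_below (range (test_err n k m))"
    by (rule bdd_belowI[of _ 0]) (auto simp: test_err_def max.coboundedI1)
  hence "(INF \<psi>. test_err n k m \<psi>) \<le> test_err n k m (\<lambda>_. bernoulli_pmf (1/2))"
    by (rule cINF_lower) (rule UNIV_I)
  also have "\<dots> = 1/2"
    by (simp add: test_err_def measure_pmf_single pmf_bernoulli_half)
  finally show ?thesis .
qed

context k_flats
begin

lemma flat_test_error_le:
  "max (measure_pmf.prob (Pu m) {V. Zc n m V > 0})
       (measure_pmf.prob (P_planted n k m) {V. \<not> Zc n m V > 0}) \<le> mean_Z n k m"
proof -
  have "measure_pmf.prob (P_planted n k m) {V. \<not> Zc n m V > 0}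
      = measure_pmf.expectation (P_planted n k m) (indicator {V. \<not> Zc n m V > 0})"
    by simp
  also have "\<dots> = measure_pmf.expectation (Pu m)
      (\<lambda>V. indicator {V. \<not> Zc n m V > 0} V * real (Zc n m V) / mean_Z n k m)"
    by (rule expectation_P_planted)
  also have "\<dots> = measure_pmf.expectation (Pu m) (\<lambda>V. 0)"
    by (intro arg_cong[where f="measure_pmf.expectation (Pu m)"] ext) (auto simp: indicator_def)
  also have "\<dots> = 0" by simp
  finally have planted: "measure_pmf.prob (P_planted n k m) {V. \<not> Zc n m V > 0} = 0" .
  have "measure_pmf.prob (Pu m) {V. Zc n m V > 0} = measure_pmf.expectation (Pu m) (indicator {V. Zc n m V > 0})"
    by simp
  also have "\<dots> \<le> measure_pmf.expectation (Pu m) (\<lambda>V. real (Zc n m V))"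
    by (rule integral_mono) (auto simp: indicator_def)
  finally have "measure_pmf.prob (Pu m) {V. Zc n m V > 0} \<le> measure_pmf.expectation (Pu m) (\<lambda>V. real (Zc n m V))" .
  thus ?thesis using planted mean_Z_pos[of m] by (simp add: expectation_Z)
qed

lemma test_err_ge: "(1 - 1 / sqrt (mean_Z n k m)) / 2 \<le> test_err n k m \<psi>"
proof -
  let ?\<mu> = "mean_Z n k m" and ?E = "measure_pmf.expectation (Pu m)"
  define g where "g = (\<lambda>V. pmf (\<psi> V) True)"
  define X where "X = (\<lambda>V. real (Zc n m V) / ?\<mu>)"
  define e where "e = 1 / (2 * sqrt ?\<mu>)"
  have \<mu>: "?\<mu> > 0" by (rule mean_Z_pos)
  have e: "e > 0" using \<mu> by (simp add: e_def)
  have unif: "measure_pmf.prob (bind_pmf (Pu m) \<psi>) {True} = ?E g"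
    by (simp add: measure_pmf_single pmf_bind g_def)
  have "measure_pmf.prob (bind_pmf (P_planted n k m) \<psi>) {False}
      = measure_pmf.expectation (P_planted n k m) (\<lambda>V. 1 - g V)"
    unfolding measure_pmf_single pmf_bind g_def by (simp only: pmf_False_conv_True)
  also have "\<dots> = ?E (\<lambda>V. (1 - g V) * X V)"
    by (simp add: expectation_P_planted X_def)
  also have "\<dots> = ?E X - ?E (\<lambda>V. g V * (X V - 1)) - ?E g"
    by (simp add: algebra_simps integral_diff)
  also have "?E X = 1" using expectation_Z[of m] \<mu> by (simp add: X_def)
  finally have planted: "measure_pmf.prob (bind_pmf (P_planted n k m) \<psi>) {False}
      = 1 - ?E (\<lambda>V. g V * (X V - 1)) - ?E g" .
  have "?E (\<lambda>V. g V * (X V - 1)) \<le> ?E (\<lambda>V. e + (X V - 1)^2 / (4 * e))"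
    using e by (intro integral_mono mult_le_eps_plus_square) (auto simp: g_def pmf_le_1)
  also have "\<dots> = e + ?E (\<lambda>V. (X V - 1)^2) / (4 * e)"
    by simp
  also have "\<dots> \<le> e + 1 / ?\<mu> / (4 * e)"
    using expectation_Z_deviation_le[of m] e unfolding X_def
    by (intro add_left_mono divide_right_mono) auto
  also have "\<dots> = 1 / sqrt ?\<mu>"
  proof -
    have "1 / (2 * s) + 1 / s^2 / (4 * (1 / (2 * s))) = 1 / s" if "s > 0" for s :: real
      using that by (simp add: field_simps power2_eq_square)
    from this[of "sqrt ?\<mu>"] show ?thesis using \<mu> by (simp add: e_def)
  qed
  finally have "1 - 1 / sqrt ?\<mu> \<le> measure_pmf.prob (bind_pmf (Pu m) \<psi>) {True}
      + measure_pmf.prob (bind_pmf (P_planted n k m) \<psi>) {False}"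
    unfolding unif planted by linarith
  thus ?thesis by (simp add: test_err_def max_def)
qed

lemma INF_test_err_ge: "(1 - 1 / sqrt (mean_Z n k m)) / 2 \<le> (INF \<psi>. test_err n k m \<psi>)"
  by (rule cINF_greatest) (simp, rule test_err_ge)

end

section \<open>Asymptotics at \<open>m = \<lfloor>\<Delta> n\<rfloor>\<close>\<close>

lemma mm_bounds:
  assumes "\<Delta> > 0"
  shows "\<Delta> * real n - 1 \<le> real (mm \<Delta> n)" "real (mm \<Delta> n) \<le> \<Delta> * real n"
  using assms by (simp_all add: mm_def of_int_floor_le)

text \<open>Writing \<open>L = ln (1 - 2^-k) < 0\<close>, we have \<open>\<Delta>\<^sub>k = - ln 2 / L\<close> and
  \<open>mean_Z n k (mm \<Delta> n) = exp (n ln 2 + mm \<Delta> n \<cdot> L) \<approx> exp (n (ln 2 + \<Delta> L))\<close>.\<close>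

lemma mean_Z_mm_bounds:
  assumes "k \<ge> 1" "\<Delta> > 0"
  defines "L \<equiv> ln (1 - 1/2^k :: real)"
  shows "L < 0" "Delta_k k = - ln 2 / L"
    and "exp (ln 2 + \<Delta> * L) ^ n \<le> mean_Z n k (mm \<Delta> n)"
    and "mean_Z n k (mm \<Delta> n) \<le> exp (- L) * exp (ln 2 + \<Delta> * L) ^ n"
proof -
  have "(2::real)^1 \<le> 2^k" using assms(1) by (intro power_increasing) auto
  hence q: "(0::real) < 1 - 1/2^k" "1 - 1/2^k < (1::real)" by (auto simp: field_simps)
  thus "L < 0" by (simp add: L_def)
  have "(2::real) powr (- real k) = 1/2^k"
    by (simp add: powr_minus powr_realpow inverse_eq_divide)
  thus "Delta_k k = - ln 2 / L" by (simp add: Delta_k_def L_def ln_div)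
  have mean: "mean_Z n k (mm \<Delta> n) = exp (real n * ln 2 + real (mm \<Delta> n) * L)"
    using q by (simp add: mean_Z_def L_def exp_add exp_of_nat_mult)
  have exp_pow: "exp (ln 2 + \<Delta> * L) ^ n = exp (real n * (ln 2 + \<Delta> * L))"
    by (simp add: exp_of_nat_mult)
  show "exp (ln 2 + \<Delta> * L) ^ n \<le> mean_Z n k (mm \<Delta> n)"
    using mult_right_mono_neg[OF mm_bounds(2)[OF assms(2)] less_imp_le[OF \<open>L < 0\<close>]]
    unfolding mean exp_pow by (simp add: algebra_simps)
  show "mean_Z n k (mm \<Delta> n) \<le> exp (- L) * exp (ln 2 + \<Delta> * L) ^ n"
    using mult_right_mono_neg[OF mm_bounds(1)[OF assms(2)] less_imp_le[OF \<open>L < 0\<close>]]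
    unfolding mean exp_pow exp_add[symmetric] by (simp add: algebra_simps)
qed

lemma mean_Z_mm_tendsto_0:
  assumes "k \<ge> 1" "\<Delta> > 0" "\<Delta> > Delta_k k"
  shows "(\<lambda>n. mean_Z n k (mm \<Delta> n)) \<longlonglongrightarrow> 0"
proof -
  define L where "L = ln (1 - 1/2^k :: real)"
  note bounds = mean_Z_mm_bounds[OF assms(1,2), folded L_def]
  from assms(3) have "- ln 2 / L < \<Delta>" by (simp only: bounds(2))
  hence "ln 2 + \<Delta> * L < 0" by (simp only: neg_divide_less_eq[OF bounds(1)])
  hence lim: "(\<lambda>n. exp (- L) * exp (ln 2 + \<Delta> * L) ^ n) \<longlonglongrightarrow> 0"
    by (intro tendsto_mult_right_zero LIMSEQ_power_zero) simp
  have "\<forall>\<^sub>F n in sequentially. 0 \<le> mean_Z n k (mm \<Delta> n)"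
    by (intro always_eventually allI order.trans[OF _ bounds(3)]) simp
  moreover have "\<forall>\<^sub>F n in sequentially. mean_Z n k (mm \<Delta> n) \<le> exp (- L) * exp (ln 2 + \<Delta> * L) ^ n"
    by (intro always_eventually allI bounds(4))
  ultimately show ?thesis
    using lim by (rule tendsto_sandwich[OF _ _ tendsto_const])
qed

lemma mean_Z_mm_at_top:
  assumes "k \<ge> 1" "\<Delta> > 0" "\<Delta> < Delta_k k"
  shows "filterlim (\<lambda>n. mean_Z n k (mm \<Delta> n)) at_top sequentially"
proof -
  define L where "L = ln (1 - 1/2^k :: real)"
  note bounds = mean_Z_mm_bounds[OF assms(1,2), folded L_def]
  from assms(3) have "\<Delta> < - ln 2 / L" by (simp only: bounds(2))
  hence "ln 2 + \<Delta> * L > 0" by (simp only: neg_less_divide_eq[OF bounds(1)])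
  hence "filterlim (\<lambda>n. exp (ln 2 + \<Delta> * L) ^ n) at_top sequentially"
    by (intro filterlim_at_infinity_imp_filterlim_at_top filterlim_realpow_sequentially_gt1) auto
  thus ?thesis
    by (rule filterlim_at_top_mono) (intro always_eventually allI bounds(3))
qed

lemma eventually_k_flats: "k \<ge> 1 \<Longrightarrow> \<forall>\<^sub>F n in sequentially. k_flats n k"
  using eventually_ge_at_top[of k] by eventually_elim (unfold_locales)

lemma flat_test_error_tendsto_0:
  assumes "k \<ge> 1" "\<Delta> > 0" "\<Delta> > Delta_k k"
  shows "(\<lambda>n. max (measure_pmf.prob (P_unif n k (mm \<Delta> n)) {V. Zc n (mm \<Delta> n) V > 0})
                   (measure_pmf.prob (P_planted n k (mm \<Delta> n)) {V. \<not> Zc n (mm \<Delta> n) V > 0}))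
         \<longlonglongrightarrow> 0"
proof (rule tendsto_sandwich[OF _ _ tendsto_const mean_Z_mm_tendsto_0[OF assms]])
  show "\<forall>\<^sub>F n in sequentially.
      0 \<le> max (measure_pmf.prob (P_unif n k (mm \<Delta> n)) {V. Zc n (mm \<Delta> n) V > 0})
              (measure_pmf.prob (P_planted n k (mm \<Delta> n)) {V. \<not> Zc n (mm \<Delta> n) V > 0})"
    by (simp add: max.coboundedI1)
  show "\<forall>\<^sub>F n in sequentially.
      max (measure_pmf.prob (P_unif n k (mm \<Delta> n)) {V. Zc n (mm \<Delta> n) V > 0})
          (measure_pmf.prob (P_planted n k (mm \<Delta> n)) {V. \<not> Zc n (mm \<Delta> n) V > 0})
      \<le> mean_Z n k (mm \<Delta> n)"
    using eventually_k_flats[OF assms(1)] by eventually_elim (rule k_flats.flat_test_error_le)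
qed

lemma INF_test_err_tendsto_half:
  assumes "k \<ge> 1" "\<Delta> > 0" "\<Delta> < Delta_k k"
  shows "(\<lambda>n. INF \<psi>. test_err n k (mm \<Delta> n) \<psi>) \<longlonglongrightarrow> 1/2"
proof (rule tendsto_sandwich)
  show "\<forall>\<^sub>F n in sequentially. (1 - 1 / sqrt (mean_Z n k (mm \<Delta> n))) / 2 \<le> (INF \<psi>. test_err n k (mm \<Delta> n) \<psi>)"
    using eventually_k_flats[OF assms(1)] by eventually_elim (rule k_flats.INF_test_err_ge)
  show "\<forall>\<^sub>F n in sequentially. (INF \<psi>. test_err n k (mm \<Delta> n) \<psi>) \<le> 1/2"
    by (intro always_eventually allI INF_test_err_le_half)
  have "(\<lambda>n. (1 - inverse (sqrt (mean_Z n k (mm \<Delta> n)))) / 2) \<longlonglongrightarrow> (1 - 0) / 2"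
    using filterlim_compose[OF sqrt_at_top mean_Z_mm_at_top[OF assms]]
    by (intro tendsto_intros tendsto_inverse_0_at_top) auto
  thus "(\<lambda>n. (1 - 1 / sqrt (mean_Z n k (mm \<Delta> n))) / 2) \<longlonglongrightarrow> 1/2"
    by (simp add: inverse_eq_divide)
qed (rule tendsto_const)

theorem mainTheorem5:
  fixes k :: nat and \<Delta> :: real
  assumes "k \<ge> 1" and "\<Delta> > 0"
  shows "(\<Delta> > Delta_k k \<longrightarrow>
           (\<lambda>n. max (measure_pmf.prob (P_unif n k (mm \<Delta> n)) {V. Zc n (mm \<Delta> n) V > 0})
                      (measure_pmf.prob (P_planted n k (mm \<Delta> n)) {V. \<not> Zc n (mm \<Delta> n) V > 0}))
           \<longlonglongrightarrow> 0)
       \<and> (\<Delta> < Delta_k k \<longrightarrow>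
           (\<lambda>n. INF \<psi>\<in>(UNIV :: ((nat \<Rightarrow> bool list set) \<Rightarrow> bool pmf) set).
                   test_err n k (mm \<Delta> n) \<psi>)
           \<longlonglongrightarrow> 1/2)"
  using flat_test_error_tendsto_0[OF assms] INF_test_err_tendsto_half[OF assms] by blast

end
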